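(* There exists a Stackelberg game $(G,L,F)$ such that $\mathcal{X}^{PS\text{-}NF}\not\subseteq\mathcal{X}^S$, where $\mathcal{X}^S$ refers to $(G,L,F)$ and $\mathcal{X}^{PS\text{-}NF}$ refers to $(G,N,\emptyset)$.
   Context: A finite game is $G=(N,\{S_p\}_{p\in N},\{u_p\}_{p\in N})$ with players $N=\{1,\dots,n\}$, finite nonempty strategy sets $S_p$, and utilities $u_p:S\to\mathbb{R}$ on $S=\prod_{p\in N}S_p$; write $s=(s_p,s_{-p})$ with $s_{-p}\in S_{-p}=\prod_{q\neq p}S_q$. $\mathcal{X}=\Delta(S)$ is the set of probability distributions on $S$ and $u_p(x)=\sum_{s\in S}x(s)u_p(s)$ for $x\in\mathcal{X}$. For $P\subseteq N$, $\mathcal{X}^{CE}_P$ is the set of $x\in\mathcal{X}$ such that for every $p\in P$ and all $s_p\neq s_p'\in S_p$: $\sum_{s_{-p}\in S_{-p}} x(s_p,s_{-p})\,(u_p(s_p,s_{-p})-u_p(s_p',s_{-p}))\ge 0$; $\mathcal{X}^{CE}=\mathcal{X}^{CE}_N$ is the set of correlated equilibria of $G$. A Stackelberg game (SG) is a triple $(G,L,F)$ with $L\cup F=N$ and $L\cap F=\emptyset$ (leaders and followers). For $P\subseteq N$, $\Pi_P$ is the set of ordered subsets of $P$ (finite sequences of pairwise distinct elements of $P$, including the empty sequence $\varnothing$); for $\pi\in\Pi_P$ and $p\in P$ not occurring in $\pi$, $\pi p$ is $\pi$ with $p$ appended; when used as a set, $\pi$ means its set of entries. $\mathbf{X}=\prod_{\pi\in\Pi_L}\mathcal{X}^{CE}_{\pi\cup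 F}$, with elements $\mathbf{x}=[x_\pi]_{\pi\in\Pi_L}$. For $\mathbf{x}\in\mathbf{X}$ and $\pi\in\Pi_L$, $x_\pi$ is stable if $u_p(x_\pi)\ge u_p(x_{\pi p})$ for all $p\in L\setminus\pi$; $\mathbf{x}$ is stable if $x_\varnothing$ is stable, and perfectly stable if $x_\pi$ is stable for every $\pi\in\Pi_L$; $\mathbf{X}^{S}$ and $\mathbf{X}^{PS}$ denote the sets of stable and perfectly stable elements of $\mathbf{X}$. $\mathcal{X}^S=\{x_\varnothing:\mathbf{x}\in\mathbf{X}^S\}$ and $\mathcal{X}^{PS}=\{x_\varnothing:\mathbf{x}\in\mathbf{X}^{PS}\}$ (for the given SG). $\mathcal{X}^{S\text{-}NF}$ and $\mathcal{X}^{PS\text{-}NF}$ are the sets $\mathcal{X}^S$ and $\mathcal{X}^{PS}$ computed for the SG $(G,N,\emptyset)$ in which every player is a leader. *)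

theory Defs
  imports "HOL-Library.FuncSet" Complex_Main
begin

(* A finite game with players N = {1..n}; strategies of player p are the set S p
   (strategies encoded as naturals); pure profiles are extensional functions
   s : {1..n} -> strategies; u p s is the utility of player p at profile s. *)

definition players :: "nat \<Rightarrow> nat set" where
  "players n = {1..n}"

definition profiles :: "nat \<Rightarrow> (nat \<Rightarrow> nat set) \<Rightarrow> (nat \<Rightarrow> nat) set" where
  "profiles n S = PiE (players n) S"

definition finite_game :: "nat \<Rightarrow> (nat \<Rightarrow> nat set) \<Rightarrow> (nat \<Rightarrow> (nat \<Rightarrow> nat) \<Rightarrow> real) \<Rightarrow> bool" where
  "finite_game n S u \<longleftrightarrow> n \<ge> 1 \<and> (\<forall>p \<in> players n. finite (S p) \<and> S p \<noteq> {})"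

definition distributions :: "nat \<Rightarrow> (nat \<Rightarrow> nat set) \<Rightarrow> ((nat \<Rightarrow> nat) \<Rightarrow> real) set" where
  "distributions n S = {x. (\<forall>s \<in> profiles n S. x s \<ge> 0) \<and>
                          (\<forall>s. s \<notin> profiles n S \<longrightarrow> x s = 0) \<and>
                          (\<Sum>s \<in> profiles n S. x s) = 1}"

definition exp_util :: "nat \<Rightarrow> (nat \<Rightarrow> nat set) \<Rightarrow> (nat \<Rightarrow> (nat \<Rightarrow> nat) \<Rightarrow> real)
                        \<Rightarrow> nat \<Rightarrow> ((nat \<Rightarrow> nat) \<Rightarrow> real) \<Rightarrow> real" where
  "exp_util n S u p x = (\<Sum>s \<in> profiles n S. x s * u p s)"

definition CE_set :: "nat \<Rightarrow> (nat \<Rightarrow> nat set) \<Rightarrow> (nat \<Rightarrow> (nat \<Rightarrow> nat) \<Rightarrow> real)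
                      \<Rightarrow> nat set \<Rightarrow> ((nat \<Rightarrow> nat) \<Rightarrow> real) set" where
  "CE_set n S u P = {x \<in> distributions n S.
     \<forall>p \<in> P. \<forall>a \<in> S p. \<forall>b \<in> S p. a \<noteq> b \<longrightarrow>
       (\<Sum>s \<in> {s \<in> profiles n S. s p = a}. x s * (u p s - u p (s(p := b)))) \<ge> 0}"

definition ordered_subsets :: "nat set \<Rightarrow> nat list set" where
  "ordered_subsets P = {\<pi>. distinct \<pi> \<and> set \<pi> \<subseteq> P}"

definition SG_X :: "nat \<Rightarrow> (nat \<Rightarrow> nat set) \<Rightarrow> (nat \<Rightarrow> (nat \<Rightarrow> nat) \<Rightarrow> real)
                    \<Rightarrow> nat set \<Rightarrow> nat set \<Rightarrow> (nat list \<Rightarrow> ((nat \<Rightarrow> nat) \<Rightarrow> real)) set" where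
  "SG_X n S u L F = {xx. \<forall>\<pi> \<in> ordered_subsets L. xx \<pi> \<in> CE_set n S u (set \<pi> \<union> F)}"

definition stable_at :: "nat \<Rightarrow> (nat \<Rightarrow> nat set) \<Rightarrow> (nat \<Rightarrow> (nat \<Rightarrow> nat) \<Rightarrow> real)
                    \<Rightarrow> nat set \<Rightarrow> (nat list \<Rightarrow> ((nat \<Rightarrow> nat) \<Rightarrow> real)) \<Rightarrow> nat list \<Rightarrow> bool" where
  "stable_at n S u L xx \<pi> \<longleftrightarrow>
     (\<forall>p \<in> L - set \<pi>. exp_util n S u p (xx \<pi>) \<ge> exp_util n S u p (xx (\<pi> @ [p])))"

definition X_S :: "nat \<Rightarrow> (nat \<Rightarrow> nat set) \<Rightarrow> (nat \<Rightarrow> (nat \<Rightarrow> nat) \<Rightarrow> real)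
                    \<Rightarrow> nat set \<Rightarrow> nat set \<Rightarrow> ((nat \<Rightarrow> nat) \<Rightarrow> real) set" where
  "X_S n S u L F = {xx []| xx. xx \<in> SG_X n S u L F \<and> stable_at n S u L xx []}"

definition X_PS :: "nat \<Rightarrow> (nat \<Rightarrow> nat set) \<Rightarrow> (nat \<Rightarrow> (nat \<Rightarrow> nat) \<Rightarrow> real)
                    \<Rightarrow> nat set \<Rightarrow> nat set \<Rightarrow> ((nat \<Rightarrow> nat) \<Rightarrow> real) set" where
  "X_PS n S u L F = {xx []| xx. xx \<in> SG_X n S u L F \<and>
                         (\<forall>\<pi> \<in> ordered_subsets L. stable_at n S u L xx \<pi>)}"

end

theory Submission
  imports Defs
begin

text \<open>Take the prisoner's dilemma. With both players as leaders, the cooperative outcome is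
perfectly stable: a leader who commits hands the play to a subgame in which mutual defection,
a correlated equilibrium worse for everybody, can be played. With no
leaders, stable outcomes are just correlated equilibria, and cooperation is not one, since
defection is strictly dominant.\<close>

definition point_mass :: "(nat \<Rightarrow> nat) \<Rightarrow> (nat \<Rightarrow> nat) \<Rightarrow> real" where
  "point_mass d s = (if s = d then 1 else 0)"

lemma sum_point_mass_mult:
  assumes "finite A"
  shows "(\<Sum>s\<in>A. point_mass d s * g s) = (if d \<in> A then g d else 0)"
proof -
  have "(\<Sum>s\<in>A. point_mass d s * g s) = (\<Sum>s\<in>A. if d = s then g s else 0)"
    by (rule sum.cong) (auto simp: point_mass_def)
  also have "\<dots> = (if d \<in> A then g d else 0)"
    using assms by (simp add: sum.delta)
  finally show ?thesis .
qed

lemma finite_profiles: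
  assumes "finite_game n S u"
  shows "finite (profiles n S)"
  using assms by (auto simp: finite_game_def profiles_def players_def intro!: finite_PiE)

lemma point_mass_in_distributions:
  assumes "finite (profiles n S)" and "d \<in> profiles n S"
  shows "point_mass d \<in> distributions n S"
  using assms sum_point_mass_mult[OF assms(1), of d "\<lambda>_. 1"]
  by (auto simp: distributions_def point_mass_def)

lemma exp_util_point_mass:
  assumes "finite (profiles n S)" and "d \<in> profiles n S"
  shows "exp_util n S u p (point_mass d) = u p d"
  using assms by (simp add: exp_util_def sum_point_mass_mult)

lemma point_mass_in_CE_set_iff:
  assumes fin: "finite (profiles n S)" and d: "d \<in> profiles n S" and P: "P \<subseteq> players n"
  shows "point_mass d \<in> CE_set n S u P \<longleftrightarrow> (\<forall>p\<in>P. \<forall>b\<in>S p. u p (d(p := b)) \<le> u p d)"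
proof -
  have CE_sum: "(\<Sum>s\<in>{s \<in> profiles n S. s p = a}. point_mass d s * (u p s - u p (s(p := b))))
      = (if d p = a then u p d - u p (d(p := b)) else 0)" for p a b
    using fin d by (subst sum_point_mass_mult) auto
  have "d p \<in> S p" if "p \<in> P" for p
    using d P that by (auto simp: profiles_def)
  then show ?thesis
    unfolding CE_set_def using point_mass_in_distributions[OF fin d]
    by (auto simp: CE_sum) (metis fun_upd_triv order_refl)
qed

lemma CE_set_antimono:
  assumes "P \<subseteq> Q"
  shows "CE_set n S u Q \<subseteq> CE_set n S u P"
  using assms by (auto simp: CE_set_def)

lemma CE_set_empty: "CE_set n S u {} = distributions n S"
  by (simp add: CE_set_def)

lemma X_S_no_leaders: "X_S n S u {} F = CE_set n S u F"
proof -
  have "ordered_subsets {} = {[]}"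
    by (auto simp: ordered_subsets_def)
  then show ?thesis
    by (auto simp: X_S_def SG_X_def stable_at_def)
qed

text \<open>The witness plays \<open>x\<close> at the root and the correlated equilibrium \<open>y\<close> in every proper
subgame; the root is stable because every leader weakly prefers \<open>x\<close> to \<open>y\<close>, and every other node
is stable because all its children also play \<open>y\<close>.\<close>

lemma X_PS_if_dominates_CE:
  assumes x: "x \<in> CE_set n S u F" and y: "y \<in> CE_set n S u (L \<union> F)"
    and dom: "\<forall>p\<in>L. exp_util n S u p y \<le> exp_util n S u p x"
  shows "x \<in> X_PS n S u L F"
proof -
  define xx where "xx = (\<lambda>\<pi>::nat list. if \<pi> = [] then x else y)"
  have "xx \<pi> \<in> CE_set n S u (set \<pi> \<union> F)" if "\<pi> \<in> ordered_subsets L" for \<pi>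
  proof (cases "\<pi> = []")
    case False
    have "set \<pi> \<union> F \<subseteq> L \<union> F"
      using that by (auto simp: ordered_subsets_def)
    then have "y \<in> CE_set n S u (set \<pi> \<union> F)"
      using y CE_set_antimono by blast
    with False show ?thesis
      by (simp add: xx_def)
  qed (use x in \<open>simp add: xx_def\<close>)
  moreover have "stable_at n S u L xx \<pi>" for \<pi>
    using dom by (auto simp: stable_at_def xx_def)
  ultimately show ?thesis
    unfolding X_PS_def SG_X_def by (intro CollectI exI[of _ xx]) (simp add: xx_def)
qed

text \<open>The prisoner's dilemma on players \<open>{1, 2}\<close>: strategy \<open>1\<close> is defection, \<open>0\<close> cooperation;
defecting earns \<open>1\<close> for oneself, cooperating gives \<open>2\<close> to the opponent \<open>3 - p\<close>.\<close>

definition pd_strategies :: "nat \<Rightarrow> nat set" where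
  "pd_strategies = (\<lambda>_. {0, 1})"

definition pd_util :: "nat \<Rightarrow> (nat \<Rightarrow> nat) \<Rightarrow> real" where
  "pd_util p s = real (s p) + 2 * (1 - real (s (3 - p)))"

definition uniform_profile :: "nat \<Rightarrow> nat \<Rightarrow> nat" where
  "uniform_profile c = restrict (\<lambda>_. c) (players 2)"

lemma players_2: "players 2 = {1, 2}"
  by (auto simp: players_def)

lemma pd_finite_game: "finite_game 2 pd_strategies pd_util"
  by (simp add: finite_game_def pd_strategies_def)

lemma uniform_profile_in_profiles:
  "c \<in> {0, 1} \<Longrightarrow> uniform_profile c \<in> profiles 2 pd_strategies"
  by (auto simp: profiles_def uniform_profile_def pd_strategies_def)

lemma pd_util_uniform_profile:
  "p \<in> players 2 \<Longrightarrow> pd_util p (uniform_profile c) = real c + 2 * (1 - real c)"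
  by (auto simp: pd_util_def uniform_profile_def players_2)

lemma pd_defection_is_CE:
  "point_mass (uniform_profile 1) \<in> CE_set 2 pd_strategies pd_util (players 2)"
  using finite_profiles[OF pd_finite_game] uniform_profile_in_profiles
  by (subst point_mass_in_CE_set_iff)
     (auto simp: pd_strategies_def pd_util_def uniform_profile_def players_2)

lemma pd_cooperation_not_CE:
  "point_mass (uniform_profile 0) \<notin> CE_set 2 pd_strategies pd_util (players 2)"
  using finite_profiles[OF pd_finite_game] uniform_profile_in_profiles
  by (subst point_mass_in_CE_set_iff)
     (auto simp: pd_strategies_def pd_util_def uniform_profile_def players_2 intro!: bexI[of _ 1])

theorem mainTheorem15:
  shows "\<exists>n S u L F. finite_game n S u \<and> L \<union> F = players n \<and> L \<inter> F = {} \<and>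
           \<not> (X_PS n S u (players n) {} \<subseteq> X_S n S u L F)"
proof (intro exI conjI)
  let ?coop = "point_mass (uniform_profile 0)"
  have fin: "finite (profiles 2 pd_strategies)"
    using finite_profiles[OF pd_finite_game] .
  have "?coop \<in> X_PS 2 pd_strategies pd_util (players 2) {}"
  proof (rule X_PS_if_dominates_CE)
    show "?coop \<in> CE_set 2 pd_strategies pd_util {}"
      using point_mass_in_distributions[OF fin] uniform_profile_in_profiles
      by (simp add: CE_set_empty)
    show "point_mass (uniform_profile 1) \<in> CE_set 2 pd_strategies pd_util (players 2 \<union> {})"
      using pd_defection_is_CE by simp
  qed (simp add: exp_util_point_mass[OF fin] uniform_profile_in_profiles pd_util_uniform_profile)
  then show "\<not> X_PS 2 pd_strategies pd_util (players 2) {}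
      \<subseteq> X_S 2 pd_strategies pd_util {} (players 2)"
    using pd_cooperation_not_CE by (auto simp: X_S_no_leaders)
qed (use pd_finite_game in auto)

end
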